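(* Let $S=S(c,r)\subset\mathbb{R}^{n+1}$ be an $n$-dimensional sphere and $\mathcal{V}=\{V_1,\dots,V_s\}$ a finite collection of codimension-one affine subspaces containing $c$. Let $\boldsymbol{\epsilon}=(\epsilon_0,\dots,\epsilon_{n-1})$ decrease sufficiently rapidly and prevent improper tube interference with respect to $(S,\mathcal{V})$. Then for each $x\in\bigcup_{j<n}\mathbf{T}_j$ there is a largest integer $k(x)$ with $0\le k(x)\le n-1$ for which there exist a great sphere $S_\alpha$ with $\dim S_\alpha=k(x)$ and a point $z\in S_\alpha$ such that $x\in F_\alpha(z,\epsilon_{k(x)})$ and $$\partial_{rel}F_\alpha(z,\epsilon_{k(x)})\cap(\mathbf{T}_0\cup\mathbf{T}_1\cup\dots\cup\mathbf{T}_{k(x)-1})=\emptyset$$ (the union being empty when $k(x)=0$). Moreover, the $(\alpha,\epsilon_{k(x)})$-spherical cap with top at $z$ containing $x$ with these properties is unique (i.e. the great sphere $S_\alpha$ and the point $z$ are uniquely determined by $x$).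
   Context: Notation. For $x\in S$, $\mathcal{V}_x=\{V_i\in\mathcal{V}: x\in V_i\}$. For $\alpha\subset\{1,\dots,s\}$: $V_\alpha=\bigcap_{i\in\alpha}V_i$ ($V_\emptyset=\mathbb{R}^{n+1}$), $S_\alpha=S\cap V_\alpha$ (a great sphere; $\dim S_\alpha=\dim V_\alpha-1$), and $W_\alpha$ is the linear subspace orthogonal to the direction space of $V_\alpha$. $U_\epsilon(A)$ is the open $\epsilon$-neighborhood of $A$. Tubular neighborhood: $T_\epsilon(S_\alpha)=\{p\in S: p-c=a+u,\ a\in V_\alpha-c,\ u\in W_\alpha,\ \|u\|<\epsilon\}$. Spherical cap with top $z\in S_\alpha$: $F_\alpha(z,\epsilon)=\{p\in S: p-c=t(z-c)+u,\ t>0,\ u\in W_\alpha,\ \|u\|<\epsilon\}$, with relative boundary $\partial_{rel}F_\alpha(z,\epsilon)$ defined the same way with $\|u\|=\epsilon$. For $j=0,\dots,n-1$, $\mathbf{T}_j=\mathbf{T}_j(\epsilon_j)=\bigcup_{\dim S_\alpha=j}T_{\epsilon_j}(S_\alpha)$. Set $\Omega_0=\bigcup_{\dim S_\alpha=0}S_\alpha$ and, for $k=1,\dots,n$, $\Omega_k=\big(\bigcup_{\dim S_\alpha=k}S_\alpha\big)\setminus\bigcup_{j<k}\mathbf{T}_j(\epsilon_j)$; $\Omega=\bigcup_{k\le n}\Omega_k$. Let $\tau=\sqrt{2-2\sqrt{2/3}}\,/8$. The tuple $\boldsymbol{\epsilon}$ of positive numbers decreases sufficiently rapidly and prevents improper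 tube interference if (1) $\epsilon_0\le\tau r$ and $\epsilon_k/\epsilon_{k-1}\le\tau$ for $k>0$; and (2) for every $0\le k\le n-1$, every $\omega\in\Omega_k$ and every $\alpha$ such that $V_\alpha\subset V_i$ for some $V_i\in\mathcal{V}$ with $V_i\notin\mathcal{V}_\omega$, one has $U_{8\epsilon_k}(\omega)\cap T_{\epsilon_k}(S_\alpha)=\emptyset$. *)

theory Defs
  imports "HOL-Analysis.Analysis"
begin

text \<open>A subcollection A \<subseteq> VV plays the role of
 the index set alpha; V_alpha = \<Inter>A (with \<Inter>{} = UNIV).\<close>

definition Valpha :: "'a set set \<Rightarrow> 'a set" where
  "Valpha A = \<Inter>A"

definition Salpha :: "'a::euclidean_space \<Rightarrow> real \<Rightarrow> 'a set set \<Rightarrow> 'a set" where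
  "Salpha c r A = sphere c r \<inter> Valpha A"

text \<open>dim S_alpha = dim V_alpha - 1\<close>
definition gdim :: "'a::euclidean_space set set \<Rightarrow> int" where
  "gdim A = aff_dim (Valpha A) - 1"

definition Lalpha :: "'a::euclidean_space \<Rightarrow> 'a set set \<Rightarrow> 'a set" where
  "Lalpha c A = (\<lambda>x. x - c) ` Valpha A"

definition Walpha :: "'a::euclidean_space \<Rightarrow> 'a set set \<Rightarrow> 'a set" where
  "Walpha c A = {u. \<forall>a\<in>Lalpha c A. inner a u = 0}"

definition tube :: "'a::euclidean_space \<Rightarrow> real \<Rightarrow> 'a set set \<Rightarrow> real \<Rightarrow> 'a set" where
  "tube c r A e = {p \<in> sphere c r. \<exists>a u. p - c = a + u \<and> a \<in> Lalpha c A \<and> u \<in> Walpha c A \<and> norm u < e}"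

definition cap :: "'a::euclidean_space \<Rightarrow> real \<Rightarrow> 'a set set \<Rightarrow> 'a \<Rightarrow> real \<Rightarrow> 'a set" where
  "cap c r A z e = {p \<in> sphere c r. \<exists>t u. t > 0 \<and> p - c = t *\<^sub>R (z - c) + u \<and> u \<in> Walpha c A \<and> norm u < e}"

definition cap_rel_boundary :: "'a::euclidean_space \<Rightarrow> real \<Rightarrow> 'a set set \<Rightarrow> 'a \<Rightarrow> real \<Rightarrow> 'a set" where
  "cap_rel_boundary c r A z e = {p \<in> sphere c r. \<exists>t u. t > 0 \<and> p - c = t *\<^sub>R (z - c) + u \<and> u \<in> Walpha c A \<and> norm u = e}"

definition bigT :: "'a::euclidean_space \<Rightarrow> real \<Rightarrow> 'a set set \<Rightarrow> (nat \<Rightarrow> real) \<Rightarrow> nat \<Rightarrow> 'a set" where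
  "bigT c r VV eps j = \<Union>{tube c r A (eps j) | A. A \<subseteq> VV \<and> gdim A = int j}"

definition Omega :: "'a::euclidean_space \<Rightarrow> real \<Rightarrow> 'a set set \<Rightarrow> (nat \<Rightarrow> real) \<Rightarrow> nat \<Rightarrow> 'a set" where
  "Omega c r VV eps k = \<Union>{Salpha c r A | A. A \<subseteq> VV \<and> gdim A = int k} - (\<Union>j<k. bigT c r VV eps j)"

definition Vx :: "'a set set \<Rightarrow> 'a \<Rightarrow> 'a set set" where
  "Vx VV x = {V \<in> VV. x \<in> V}"

definition tau :: real where
  "tau = sqrt (2 - 2 * sqrt (2/3)) / 8"

definition good_eps :: "'a::euclidean_space \<Rightarrow> real \<Rightarrow> 'a set set \<Rightarrow> nat \<Rightarrow> (nat \<Rightarrow> real) \<Rightarrow> bool" where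
  "good_eps c r VV n eps \<longleftrightarrow>
     (\<forall>k<n. eps k > 0) \<and>
     eps 0 \<le> tau * r \<and> (\<forall>k. 0 < k \<and> k < n \<longrightarrow> eps k / eps (k - 1) \<le> tau) \<and>
     (\<forall>k<n. \<forall>\<omega>\<in>Omega c r VV eps k. \<forall>A. A \<subseteq> VV \<and> (\<exists>V\<in>VV. Valpha A \<subseteq> V \<and> V \<notin> Vx VV \<omega>) \<longrightarrow>
         ball \<omega> (8 * eps k) \<inter> tube c r A (eps k) = {})"

definition cap_prop :: "'a::euclidean_space \<Rightarrow> real \<Rightarrow> 'a set set \<Rightarrow> (nat \<Rightarrow> real) \<Rightarrow> 'a \<Rightarrow> nat \<Rightarrow> 'a set set \<Rightarrow> 'a \<Rightarrow> bool" where
  "cap_prop c r VV eps x k A z \<longleftrightarrow>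
     A \<subseteq> VV \<and> gdim A = int k \<and> z \<in> Salpha c r A \<and> x \<in> cap c r A z (eps k) \<and>
     cap_rel_boundary c r A z (eps k) \<inter> (\<Union>j<k. bigT c r VV eps j) = {}"

end

theory Submission
  imports Defs
begin

text \<open>
  Translating by the centre, every V_alpha becomes its direction space L, a linear subspace, and
  the tube around the great sphere of L consists of the points of the sphere at distance less than
  the tube radius from L. The heart of the proof is a nesting property of the tubes: a point of the
  sphere close to the great spheres of L' and of L, where L' is not contained in L, is close to the
  smaller great sphere of L' \<inter> L, at the scale of the latter. It is proved by induction on dim L',
  together with the existence of deep points, i.e. points of a great sphere lying outside the tubes
  of all its proper great subspheres; deep points belong to Omega. If nesting failed, tilting a deep
  point of L' \<inter> L away from L' \<inter> L would produce a deep point of L' too close to the great sphere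
  of L, which condition (2) forbids. Given nesting, the cap around x at the least tube level
  containing x has its relative boundary outside all lower tubes; and two such caps of equal level
  on different great spheres are impossible, since a point of the relative boundary of one of them
  would lie in a lower tube.
\<close>

section \<open>Orthogonal projection onto a linear subspace\<close>

lemma closest_point_in_subspace:
  fixes L :: "'a::euclidean_space set"
  shows "subspace L \<Longrightarrow> closest_point L x \<in> L"
  by (metis closest_point_in_set closed_subspace empty_iff subspace_0)

lemma closest_point_subspace_orthogonal:
  fixes L :: "'a::euclidean_space set"
  assumes "subspace L"
  shows "x - closest_point L x \<in> L\<^sup>\<bottom>"
proof -
  let ?p = "closest_point L x"
  have cl: "convex L" "closed L"
    using assms by (auto simp: subspace_imp_convex closed_subspace)
  have p: "?p \<in> L"
    using assms by (rule closest_point_in_subspace)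
  have "inner l (x - ?p) = 0" if "l \<in> L" for l
  proof -
    have "inner (x - ?p) ((?p + s *\<^sub>R l) - ?p) \<le> 0" for s
      by (rule closest_point_dot[OF cl(1,2)]) (use assms p that in \<open>simp add: subspace_add subspace_scale\<close>)
    from this[of 1] this[of "-1"] show ?thesis
      by (simp add: inner_commute)
  qed
  then show ?thesis
    by (simp add: orthogonal_comp_def orthogonal_def)
qed

lemma closest_point_subspace_eqI:
  fixes L :: "'a::euclidean_space set"
  assumes L: "subspace L" and "a \<in> L" and "x - a \<in> L\<^sup>\<bottom>"
  shows "closest_point L x = a"
proof -
  let ?p = "closest_point L x"
  have "?p \<in> L"
    using L by (rule closest_point_in_subspace)
  then have "a - ?p \<in> L"
    using assms by (simp add: subspace_diff)
  moreover have "a - ?p = (x - ?p) - (x - a)"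
    by simp
  then have "a - ?p \<in> L\<^sup>\<bottom>"
    using closest_point_subspace_orthogonal[OF L, of x] assms(3)
    by (metis subspace_diff subspace_orthogonal_comp)
  ultimately have "a - ?p \<in> L \<inter> L\<^sup>\<bottom>"
    by blast
  then show ?thesis
    using orthogonal_Int_0[OF L] by simp
qed

lemma infdist_subspace_eq:
  fixes L :: "'a::euclidean_space set"
  assumes L: "subspace L" and "a \<in> L" and "x - a \<in> L\<^sup>\<bottom>"
  shows "infdist x L = norm (x - a)"
proof -
  have "closed L" "L \<noteq> {}"
    using L assms(2) by (auto intro: closed_subspace)
  then have "infdist x L = dist x (closest_point L x)"
    by (simp add: infdist_eq_setdist setdist_closest_point)
  then show ?thesis
    using closest_point_subspace_eqI[OF assms] by (simp add: dist_norm)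
qed

lemma infdist_subspace_closest_point:
  fixes L :: "'a::euclidean_space set"
  assumes L: "subspace L"
  shows "infdist x L = norm (x - closest_point L x)"
  using L by (intro infdist_subspace_eq closest_point_subspace_orthogonal closest_point_in_subspace)

lemma orthogonal_comp_memD: "u \<in> L\<^sup>\<bottom> \<Longrightarrow> l \<in> L \<Longrightarrow> inner l u = 0"
  by (simp add: orthogonal_comp_def orthogonal_def)

lemma norm_add_orthogonal_comp:
  assumes "m \<in> L" "u \<in> L\<^sup>\<bottom>"
  shows "(norm (m + u))\<^sup>2 = (norm m)\<^sup>2 + (norm u)\<^sup>2"
  using assms by (simp add: norm_add_Pythagorean orthogonal_def orthogonal_comp_memD)

lemma infdist_subspace_orthogonal:
  fixes L :: "'a::euclidean_space set"
  assumes "subspace L" "u \<in> L\<^sup>\<bottom>"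
  shows "infdist u L = norm u"
  using infdist_subspace_eq[of L 0 u] assms by (simp add: subspace_0)

lemma infdist_subspace_scaleR:
  fixes L :: "'a::euclidean_space set"
  assumes L: "subspace L"
  shows "infdist (s *\<^sub>R x) L = \<bar>s\<bar> * infdist x L"
proof -
  let ?p = "closest_point L x"
  have "s *\<^sub>R x - s *\<^sub>R ?p \<in> L\<^sup>\<bottom>"
    using closest_point_subspace_orthogonal[OF L, of x]
    by (metis scaleR_diff_right subspace_orthogonal_comp subspace_scale)
  then have "infdist (s *\<^sub>R x) L = norm (s *\<^sub>R x - s *\<^sub>R ?p)"
    using L closest_point_in_subspace[OF L] by (simp add: infdist_subspace_eq subspace_scale)
  then show ?thesis
    by (simp add: infdist_subspace_closest_point[OF L] flip: scaleR_diff_right)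
qed

lemma infdist_subspace_add_mem:
  fixes L :: "'a::euclidean_space set"
  assumes L: "subspace L" and "m \<in> L"
  shows "infdist (m + x) L = infdist x L"
proof -
  let ?p = "closest_point L x"
  have "infdist (m + x) L = norm ((m + x) - (m + ?p))"
    using closest_point_subspace_orthogonal[OF L, of x] closest_point_in_subspace[OF L] assms
    by (intro infdist_subspace_eq) (simp_all add: subspace_add)
  then show ?thesis
    by (simp add: infdist_subspace_closest_point[OF L])
qed

lemma infdist_scaleR_add_orthogonal_comp:
  fixes Z u :: "'a::euclidean_space"
  assumes "subspace L" "Z \<in> L" "u \<in> L\<^sup>\<bottom>"
  shows "infdist (t *\<^sub>R Z + u) L = norm u"
proof -
  have "infdist (t *\<^sub>R Z + u) L = norm (t *\<^sub>R Z + u - t *\<^sub>R Z)"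
    using assms by (intro infdist_subspace_eq) (simp_all add: subspace_scale)
  then show ?thesis
    by simp
qed

lemma infdist_add_orthogonal_comp_squared:
  fixes L M :: "'a::euclidean_space set"
  assumes L: "subspace L" and M: "subspace M" and "L \<subseteq> M" "m \<in> M" "u \<in> M\<^sup>\<bottom>"
  shows "(infdist (m + u) L)\<^sup>2 = (infdist m L)\<^sup>2 + (norm u)\<^sup>2"
proof -
  let ?p = "closest_point L m"
  have p: "?p \<in> L" "m - ?p \<in> L\<^sup>\<bottom>"
    using closest_point_in_subspace[OF L] closest_point_subspace_orthogonal[OF L] by auto
  have "u \<in> L\<^sup>\<bottom>"
    using orthogonal_comp_anti_mono[OF \<open>L \<subseteq> M\<close>] assms(5) by blast
  then have "m + u - ?p \<in> L\<^sup>\<bottom>"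
    using p(2) by (metis diff_add_eq subspace_add subspace_orthogonal_comp)
  then have "infdist (m + u) L = norm ((m - ?p) + u)"
    using infdist_subspace_eq[OF L p(1)] by (simp add: algebra_simps)
  moreover have "m - ?p \<in> M"
    using p(1) assms by (auto intro: subspace_diff)
  ultimately show ?thesis
    using norm_add_orthogonal_comp[of "m - ?p" M u] assms(5) L
    by (simp add: infdist_subspace_closest_point)
qed

lemma norm_square_closest_point_subspace:
  fixes L :: "'a::euclidean_space set"
  assumes L: "subspace L"
  shows "(norm x)\<^sup>2 = (norm (closest_point L x))\<^sup>2 + (infdist x L)\<^sup>2"
proof -
  have "closest_point L x \<in> L"
    using L by (rule closest_point_in_subspace)
  then show ?thesis
    using norm_add_orthogonal_comp[of "closest_point L x" L "x - closest_point L x"]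
      closest_point_subspace_orthogonal[OF L] by (simp add: infdist_subspace_closest_point[OF L])
qed

lemma closest_point_decomposition:
  fixes x :: "'a::euclidean_space"
  assumes M: "subspace M" and L: "subspace L" "M \<subseteq> L" "x \<in> L" and pos: "0 < infdist x M"
  obtains p v where "p \<in> M" "v \<in> L" "v \<in> M\<^sup>\<bottom>" "norm v = 1" "x = p + infdist x M *\<^sub>R v"
proof
  let ?p = "closest_point M x"
  let ?v = "(1 / infdist x M) *\<^sub>R (x - ?p)"
  show p: "?p \<in> M"
    using M by (rule closest_point_in_subspace)
  show "?v \<in> L"
    using p L by (auto simp: subspace_scale subspace_diff)
  show "?v \<in> M\<^sup>\<bottom>"
    using closest_point_subspace_orthogonal[OF M] by (simp add: subspace_scale subspace_orthogonal_comp)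
  show "norm ?v = 1" "x = ?p + infdist x M *\<^sub>R ?v"
    using pos by (simp_all add: infdist_subspace_closest_point[OF M])
qed

lemma dim_less_subspace:
  fixes S T :: "'a::euclidean_space set"
  assumes "subspace S" "subspace T" "S \<subset> T"
  shows "dim S < dim T"
proof -
  have "span S = S" "span T = T"
    using assms by simp_all
  then show ?thesis
    using assms dim_psubset[of S T] by metis
qed

lemma sphere_point_in_subspace:
  fixes L :: "'a::euclidean_space set"
  assumes L: "subspace L" "0 < dim L" and r: "0 \<le> r"
  obtains x where "x \<in> L" "norm x = r"
proof -
  have "\<not> L \<subseteq> {0}"
  proof
    assume "L \<subseteq> {0}"
    then have "dim L = 0"
      by (simp only: dim_eq_0)
    with L(2) show False
      by arith
  qed
  then obtain y where "y \<in> L" "y \<noteq> 0"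
    by blast
  then show thesis
    using that[of "(r / norm y) *\<^sub>R y"] L(1) r by (simp add: subspace_scale)
qed

lemma unit_orthogonal_exists:
  fixes S T :: "'a::euclidean_space set"
  assumes "subspace S" "subspace T" "S \<subset> T"
  obtains v where "v \<in> T" "v \<in> S\<^sup>\<bottom>" "norm v = 1"
proof -
  have "span S = S" "span T = T"
    using assms by simp_all
  then have "span S \<subset> span T"
    using assms by metis
  then obtain x where x: "x \<noteq> 0" "x \<in> span T" "\<And>y. y \<in> span S \<Longrightarrow> orthogonal x y"
    using orthogonal_to_subspace_exists_gen by blast
  show thesis
  proof
    show "(1 / norm x) *\<^sub>R x \<in> T"
      using x \<open>span T = T\<close> assms by (simp add: subspace_scale)
    show "(1 / norm x) *\<^sub>R x \<in> S\<^sup>\<bottom>"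
      using x \<open>span S = S\<close> by (auto simp: orthogonal_comp_def orthogonal_commute orthogonal_clauses)
    show "norm ((1 / norm x) *\<^sub>R x) = 1"
      using x by simp
  qed
qed

section \<open>Great spheres, caps and tilting\<close>

lemma hypot_less:
  fixes x y e R :: real
  assumes "y\<^sup>2 \<le> x\<^sup>2 + e\<^sup>2" "0 \<le> x" "x < 3/4 * R" "0 \<le> e" "e \<le> R / 13"
  shows "y < R"
proof -
  have "x\<^sup>2 < (3/4 * R)\<^sup>2" "e\<^sup>2 \<le> (R / 13)\<^sup>2"
    using assms by (auto intro: power_strict_mono power_mono)
  then have "y\<^sup>2 < (3/4 * R)\<^sup>2 + (R / 13)\<^sup>2"
    using assms(1) by linarith
  also have "\<dots> < R\<^sup>2"
    using assms by (simp add: power_mult_distrib power_divide)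
  finally show ?thesis
    by (rule power_less_imp_less_base) (use assms in linarith)
qed

lemma sphere_radial_gap:
  fixes a q r :: real
  assumes a: "0 < a" and q: "0 \<le> q" "q \<le> r / 2" and split: "r\<^sup>2 = a\<^sup>2 + q\<^sup>2"
  shows "a \<le> r" "r - a \<le> q / 2"
proof -
  have "a\<^sup>2 \<le> r\<^sup>2"
    using split zero_le_power2[of q] by linarith
  then show ar: "a \<le> r"
    by (rule power2_le_imp_le) (use q in linarith)
  have "(r - a) * r \<le> (r - a) * (r + a)"
    using ar a by (intro mult_left_mono) auto
  also have "\<dots> = q * q"
    using split by (simp add: power2_eq_square algebra_simps)
  also have "\<dots> \<le> q / 2 * r"
    using mult_left_mono[OF q(2) q(1)] by simp
  finally show "r - a \<le> q / 2"
    by (rule mult_right_le_imp_le) (use a ar in linarith)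
qed

lemma norm_diff_radial_push:
  fixes Y a :: "'a::euclidean_space"
  assumes "subspace L" "a \<in> L" "Y - a \<in> L\<^sup>\<bottom>" "0 < norm a" "norm a \<le> r"
  shows "(norm (Y - (r / norm a) *\<^sub>R a))\<^sup>2 = (norm (Y - a))\<^sup>2 + (r - norm a)\<^sup>2"
proof -
  have "a - (r / norm a) *\<^sub>R a = - ((r / norm a - 1) *\<^sub>R a)"
    by (simp add: algebra_simps)
  moreover have "0 \<le> r / norm a - 1"
    using assms by simp
  ultimately have "norm (a - (r / norm a) *\<^sub>R a) = (r / norm a - 1) * norm a"
    by simp
  then have "norm (a - (r / norm a) *\<^sub>R a) = r - norm a"
    using assms by (simp add: algebra_simps)
  moreover have "a - (r / norm a) *\<^sub>R a \<in> L"
    using assms by (simp add: subspace_diff subspace_scale)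
  ultimately show ?thesis
    using norm_add_orthogonal_comp[of "a - (r / norm a) *\<^sub>R a" L "Y - a"] assms(3)
    by (simp add: add.commute)
qed

lemma great_sphere_projection:
  fixes Y :: "'a::euclidean_space"
  assumes L: "subspace L" and Y: "norm Y = r" and q: "infdist Y L < r"
  obtains t Z where "Z \<in> L" "norm Z = r" "0 < t" "Y - t *\<^sub>R Z \<in> L\<^sup>\<bottom>"
    "infdist Y L \<le> r / 2 \<Longrightarrow> norm (Y - Z) \<le> 5/4 * infdist Y L"
proof -
  define a where "a = closest_point L Y"
  define q where "q = infdist Y L"
  have a: "a \<in> L" "Y - a \<in> L\<^sup>\<bottom>"
    unfolding a_def using L by (auto intro: closest_point_in_subspace closest_point_subspace_orthogonal)
  have q0: "0 \<le> q" "q < r"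
    using q by (simp_all add: q_def infdist_nonneg)
  have split: "r\<^sup>2 = (norm a)\<^sup>2 + q\<^sup>2"
    using norm_square_closest_point_subspace[OF L, of Y] Y by (simp add: a_def q_def)
  have "q\<^sup>2 < r\<^sup>2"
    using q0 by (simp add: power_strict_mono)
  then have na: "0 < norm a"
    using split by auto
  define Z where "Z = (r / norm a) *\<^sub>R a"
  show thesis
  proof
    show "Z \<in> L" "norm Z = r" "0 < norm a / r"
      using a(1) L na q0 by (auto simp: Z_def subspace_scale)
    show "Y - (norm a / r) *\<^sub>R Z \<in> L\<^sup>\<bottom>"
      using a(2) na q0 by (simp add: Z_def)
    assume "infdist Y L \<le> r / 2"
    then have gap: "norm a \<le> r" "r - norm a \<le> q / 2"
      using sphere_radial_gap[OF na q0(1) _ split] by (simp_all add: q_def)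
    have "(norm (Y - Z))\<^sup>2 = q\<^sup>2 + (r - norm a)\<^sup>2"
      using norm_diff_radial_push[OF L a na gap(1)] infdist_subspace_eq[OF L a] by (simp add: Z_def q_def)
    also have "\<dots> \<le> q\<^sup>2 + (q / 2)\<^sup>2"
      using gap by (intro add_left_mono power_mono) auto
    also have "\<dots> \<le> (5/4 * q)\<^sup>2"
      by (simp add: power2_eq_square)
    finally have "(norm (Y - Z))\<^sup>2 \<le> (5/4 * q)\<^sup>2" .
    from power2_le_imp_le[OF this] show "norm (Y - Z) \<le> 5/4 * infdist Y L"
      using q0 by (simp add: q_def)
  qed
qed

definition sphere_cap :: "real \<Rightarrow> 'a::real_inner set \<Rightarrow> 'a \<Rightarrow> real \<Rightarrow> 'a set" where
  "sphere_cap r L Z e = {p \<in> sphere 0 r. \<exists>t u. 0 < t \<and> p = t *\<^sub>R Z + u \<and> u \<in> L\<^sup>\<bottom> \<and> norm u < e}"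

definition sphere_cap_boundary :: "real \<Rightarrow> 'a::real_inner set \<Rightarrow> 'a \<Rightarrow> real \<Rightarrow> 'a set" where
  "sphere_cap_boundary r L Z e = {p \<in> sphere 0 r. \<exists>t u. 0 < t \<and> p = t *\<^sub>R Z + u \<and> u \<in> L\<^sup>\<bottom> \<and> norm u = e}"

lemma infdist_cap_point_square:
  fixes Z u :: "'a::euclidean_space"
  assumes L': "subspace L'" and L: "subspace L" and "L' \<subseteq> L" and Z: "Z \<in> L" "norm Z = r"
    and r: "0 < r" and u: "u \<in> L\<^sup>\<bottom>" and X: "norm (t *\<^sub>R Z + u) = r"
  shows "(infdist (t *\<^sub>R Z + u) L')\<^sup>2 = (infdist Z L')\<^sup>2 + (norm u)\<^sup>2 * (1 - (infdist Z L' / r)\<^sup>2)"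
proof -
  have tZ: "t *\<^sub>R Z \<in> L"
    using Z L by (simp add: subspace_scale)
  have "t\<^sup>2 * r\<^sup>2 = r\<^sup>2 - (norm u)\<^sup>2"
    using norm_add_orthogonal_comp[OF tZ u] X Z by (simp add: power_mult_distrib)
  then have t2: "t\<^sup>2 = 1 - (norm u)\<^sup>2 / r\<^sup>2"
    using r by (metis diff_divide_distrib divide_self_if nonzero_mult_div_cancel_right
        power_not_zero less_irrefl)
  have "(infdist (t *\<^sub>R Z + u) L')\<^sup>2 = t\<^sup>2 * (infdist Z L')\<^sup>2 + (norm u)\<^sup>2"
    using infdist_add_orthogonal_comp_squared[OF L' L \<open>L' \<subseteq> L\<close> tZ u]
    by (simp add: infdist_subspace_scaleR[OF L'] power_mult_distrib)
  also have "\<dots> = (infdist Z L')\<^sup>2 + (norm u)\<^sup>2 * (1 - (infdist Z L')\<^sup>2 / r\<^sup>2)"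
    unfolding t2 by (simp add: algebra_simps)
  finally show ?thesis
    by (simp add: power_divide)
qed

lemma infdist_cap_mono:
  fixes Z u u' :: "'a::euclidean_space"
  assumes L': "subspace L'" and L: "subspace L" and "L' \<subseteq> L" and Z: "Z \<in> L" "norm Z = r"
    and r: "0 < r" and u: "u \<in> L\<^sup>\<bottom>" "u' \<in> L\<^sup>\<bottom>" and "norm u \<le> norm u'"
    and X: "norm (t *\<^sub>R Z + u) = r" and P: "norm (t' *\<^sub>R Z + u') = r"
  shows "infdist (t *\<^sub>R Z + u) L' \<le> infdist (t' *\<^sub>R Z + u') L'"
    and "(infdist (t' *\<^sub>R Z + u') L')\<^sup>2 \<le> (infdist (t *\<^sub>R Z + u) L')\<^sup>2 + (norm u')\<^sup>2"
proof -
  define s where "s = 1 - (infdist Z L' / r)\<^sup>2"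
  have "infdist Z L' \<le> r"
    using infdist_le[of 0 L' Z] L' Z by (simp add: subspace_0)
  then have "(infdist Z L' / r)\<^sup>2 \<le> 1"
    using r infdist_nonneg[of Z L'] by (intro power_le_one) auto
  then have s: "0 \<le> s" "s \<le> 1"
    by (simp_all add: s_def)
  note eq = infdist_cap_point_square[OF L' L \<open>L' \<subseteq> L\<close> Z r, folded s_def]
  have "(norm u)\<^sup>2 * s \<le> (norm u')\<^sup>2 * s"
    using \<open>norm u \<le> norm u'\<close> s by (intro mult_right_mono power_mono) auto
  then have "(infdist (t *\<^sub>R Z + u) L')\<^sup>2 \<le> (infdist (t' *\<^sub>R Z + u') L')\<^sup>2"
    unfolding eq[OF u(1) X] eq[OF u(2) P] by simp
  then show "infdist (t *\<^sub>R Z + u) L' \<le> infdist (t' *\<^sub>R Z + u') L'"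
    by (rule power2_le_imp_le) (simp add: infdist_nonneg)
  have "(norm u')\<^sup>2 * s \<le> (norm u')\<^sup>2" "0 \<le> (norm u)\<^sup>2 * s"
    using s by (simp_all add: mult_left_le)
  then show "(infdist (t' *\<^sub>R Z + u') L')\<^sup>2 \<le> (infdist (t *\<^sub>R Z + u) L')\<^sup>2 + (norm u')\<^sup>2"
    unfolding eq[OF u(1) X] eq[OF u(2) P] by linarith
qed

text \<open>Rotates a point m of the sphere lying in a subspace M towards a unit vector v orthogonal to M,
  until its distance to M is t.\<close>
definition tilt :: "real \<Rightarrow> 'a \<Rightarrow> real \<Rightarrow> 'a \<Rightarrow> 'a::real_vector" where
  "tilt r m t v = (sqrt (r\<^sup>2 - t\<^sup>2) / r) *\<^sub>R m + t *\<^sub>R v"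

lemma tilt_in_subspace: "subspace L \<Longrightarrow> m \<in> L \<Longrightarrow> v \<in> L \<Longrightarrow> tilt r m t v \<in> L"
  by (simp add: tilt_def subspace_add subspace_scale)

lemma norm_tilt:
  fixes m v :: "'a::euclidean_space"
  assumes M: "subspace M" and "m \<in> M" "v \<in> M\<^sup>\<bottom>" "norm m = r" "norm v = 1"
    and r: "0 < r" and "0 \<le> t" "t \<le> r"
  shows "norm (tilt r m t v) = r"
proof -
  define \<alpha> where "\<alpha> = sqrt (r\<^sup>2 - t\<^sup>2) / r"
  have "\<alpha> *\<^sub>R m \<in> M" "t *\<^sub>R v \<in> M\<^sup>\<bottom>"
    using assms by (simp_all add: subspace_scale subspace_orthogonal_comp)
  then have "(norm (tilt r m t v))\<^sup>2 = \<alpha>\<^sup>2 * r\<^sup>2 + t\<^sup>2"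
    using norm_add_orthogonal_comp[of "\<alpha> *\<^sub>R m" M "t *\<^sub>R v"] assms
    by (simp add: tilt_def \<alpha>_def[symmetric] power_mult_distrib)
  also have "\<dots> = r\<^sup>2"
  proof -
    have "t\<^sup>2 \<le> r\<^sup>2"
      using assms by (intro power_mono) auto
    then have "\<alpha>\<^sup>2 = (r\<^sup>2 - t\<^sup>2) / r\<^sup>2"
      by (simp add: \<alpha>_def power_divide)
    then show ?thesis
      using r by simp
  qed
  finally show ?thesis
    using assms by simp
qed

lemma infdist_tilt_above:
  fixes m v :: "'a::euclidean_space"
  assumes L: "subspace L" and "M \<subseteq> L" "m \<in> M" "0 \<le> t"
  shows "infdist (tilt r m t v) L = t * infdist v L"
proof -
  have "(sqrt (r\<^sup>2 - t\<^sup>2) / r) *\<^sub>R m \<in> L"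
    using assms by (auto simp: subspace_scale)
  then show ?thesis
    using assms by (simp add: tilt_def infdist_subspace_add_mem infdist_subspace_scaleR)
qed

lemma infdist_tilt_below:
  fixes m v :: "'a::euclidean_space"
  assumes L': "subspace L'" and M: "subspace M" and "L' \<subseteq> M" and m: "m \<in> M" "norm m = r"
    and v: "v \<in> M\<^sup>\<bottom>" "norm v = 1" and r: "0 < r" and t: "0 \<le> t" "t \<le> r"
  shows "infdist m L' \<le> infdist (tilt r m t v) L'"
proof -
  have tv: "t *\<^sub>R v \<in> M\<^sup>\<bottom>"
    using v by (simp add: subspace_orthogonal_comp subspace_scale)
  have "norm (tilt r m t v) = r"
    using norm_tilt[OF M m(1) v(1) m(2) v(2) r t] .
  then have "(infdist (tilt r m t v) L')\<^sup>2 = (infdist m L')\<^sup>2 + (norm (t *\<^sub>R v))\<^sup>2 * (1 - (infdist m L' / r)\<^sup>2)"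
    unfolding tilt_def by (intro infdist_cap_point_square[OF L' M \<open>L' \<subseteq> M\<close> m r tv])
  moreover have "infdist m L' \<le> r"
    using infdist_le[of 0 L' m] L' m by (simp add: subspace_0)
  then have "(infdist m L' / r)\<^sup>2 \<le> 1"
    using r infdist_nonneg[of m L'] by (intro power_le_one) auto
  ultimately have "(infdist m L')\<^sup>2 \<le> (infdist (tilt r m t v) L')\<^sup>2"
    by simp
  then show ?thesis
    by (rule power2_le_imp_le) (simp add: infdist_nonneg)
qed

lemma sphere_cap_top_unique:
  fixes Z1 Z2 :: "'a::euclidean_space"
  assumes L: "subspace L" and Z: "Z1 \<in> L" "Z2 \<in> L" "norm Z1 = r" "norm Z2 = r" and r: "0 < r"
    and t: "0 < t1" "0 < t2" and u: "u1 \<in> L\<^sup>\<bottom>" "u2 \<in> L\<^sup>\<bottom>"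
    and X: "t1 *\<^sub>R Z1 + u1 = t2 *\<^sub>R Z2 + u2"
  shows "Z1 = Z2"
proof -
  let ?X = "t1 *\<^sub>R Z1 + u1"
  have "closest_point L ?X = t1 *\<^sub>R Z1"
    using L Z u by (intro closest_point_subspace_eqI) (simp_all add: subspace_scale)
  moreover have "closest_point L ?X = t2 *\<^sub>R Z2"
    unfolding X using L Z u by (intro closest_point_subspace_eqI) (simp_all add: subspace_scale)
  ultimately have eq: "t1 *\<^sub>R Z1 = t2 *\<^sub>R Z2"
    by simp
  then have "t1 * r = t2 * r"
    using Z t by (metis abs_of_pos norm_scaleR)
  then have "t1 = t2"
    using r by simp
  then show ?thesis
    using eq t by simp
qed

lemma tilt_in_sphere_cap_boundary:
  fixes Z v :: "'a::euclidean_space"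
  assumes L: "subspace L" and Z: "Z \<in> L" "norm Z = r" and v: "v \<in> L\<^sup>\<bottom>" "norm v = 1"
    and e: "0 < e" "e < r"
  shows "tilt r Z e v \<in> sphere_cap_boundary r L Z e"
proof -
  have "0 < sqrt (r\<^sup>2 - e\<^sup>2) / r"
    using e by (simp add: power_strict_mono)
  moreover have "e *\<^sub>R v \<in> L\<^sup>\<bottom>"
    using v by (simp add: subspace_orthogonal_comp subspace_scale)
  moreover have "norm (tilt r Z e v) = r"
    using norm_tilt[OF L Z(1) v(1) Z(2) v(2)] e by simp
  ultimately show ?thesis
    using e v unfolding sphere_cap_boundary_def tilt_def by auto
qed

lemma sphere_cap_boundary_point:
  fixes X Z :: "'a::euclidean_space"
  assumes M: "subspace M" and L: "subspace L" "L \<noteq> UNIV" "M \<subseteq> L" and Z: "Z \<in> L" "norm Z = r"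
    and X: "X \<in> sphere_cap r L Z e" and e: "0 < e" "e < r"
  obtains P where "P \<in> sphere_cap_boundary r L Z e" "(infdist P M)\<^sup>2 \<le> (infdist X M)\<^sup>2 + e\<^sup>2"
proof -
  have r: "0 < r"
    using e by simp
  obtain v where v: "v \<in> L\<^sup>\<bottom>" "norm v = 1"
    using unit_orthogonal_exists[OF L(1) subspace_UNIV] L(2) by blast
  obtain t u where X': "X = t *\<^sub>R Z + u" "u \<in> L\<^sup>\<bottom>" "norm u < e" "norm X = r"
    using X by (auto simp: sphere_cap_def)
  define \<alpha> where "\<alpha> = sqrt (r\<^sup>2 - e\<^sup>2) / r"
  have ev: "e *\<^sub>R v \<in> L\<^sup>\<bottom>" "norm (e *\<^sub>R v) = e"
    using v e by (simp_all add: subspace_orthogonal_comp subspace_scale)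
  have P: "\<alpha> *\<^sub>R Z + e *\<^sub>R v \<in> sphere_cap_boundary r L Z e" "norm (\<alpha> *\<^sub>R Z + e *\<^sub>R v) = r"
    using tilt_in_sphere_cap_boundary[OF L(1) Z v e] norm_tilt[OF L(1) Z(1) v(1) Z(2) v(2) r] e
    by (simp_all add: tilt_def \<alpha>_def)
  show thesis
  proof (rule that[OF P(1)])
    show "(infdist (\<alpha> *\<^sub>R Z + e *\<^sub>R v) M)\<^sup>2 \<le> (infdist X M)\<^sup>2 + e\<^sup>2"
      using infdist_cap_mono(2)[OF M L(1) L(3) Z r X'(2) ev(1) _ _ P(2)] X' ev by simp
  qed
qed

section \<open>Nested tubes\<close>

text \<open>T_eps(S_alpha), T_j and Omega_k translated by the centre, with great spheres represented by their
  direction spaces.\<close>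
definition sphere_tube :: "real \<Rightarrow> 'a::real_normed_vector set \<Rightarrow> real \<Rightarrow> 'a set" where
  "sphere_tube r L e = {p \<in> sphere 0 r. infdist p L < e}"

definition level_tubes :: "real \<Rightarrow> 'a::euclidean_space set set \<Rightarrow> (nat \<Rightarrow> real) \<Rightarrow> nat \<Rightarrow> 'a set" where
  "level_tubes r LL eps j = (\<Union>L \<in> {L \<in> LL. dim L = Suc j}. sphere_tube r L (eps j))"

definition core_points :: "real \<Rightarrow> 'a::euclidean_space set set \<Rightarrow> (nat \<Rightarrow> real) \<Rightarrow> nat \<Rightarrow> 'a set" where
  "core_points r LL eps k =
     (\<Union>L \<in> {L \<in> LL. dim L = Suc k}. L \<inter> sphere 0 r) - (\<Union>j<k. level_tubes r LL eps j)"

text \<open>LL stands for the direction spaces of the V_alpha and tubes_apart is condition (2); of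
  condition (1) only tau \<le> 1/13 is used.\<close>
locale great_sphere_arrangement =
  fixes r :: real and LL :: "'a::euclidean_space set set" and n :: nat and eps :: "nat \<Rightarrow> real"
  assumes r_pos: "0 < r"
    and n_less_DIM: "n < DIM('a)"
    and subspace_LL: "L \<in> LL \<Longrightarrow> subspace L"
    and Int_LL: "L \<in> LL \<Longrightarrow> L' \<in> LL \<Longrightarrow> L \<inter> L' \<in> LL"
    and eps_pos: "k < n \<Longrightarrow> 0 < eps k"
    and eps_0: "eps 0 \<le> r / 13"
    and eps_Suc: "Suc k < n \<Longrightarrow> eps (Suc k) \<le> eps k / 13"
    and tubes_apart: "k < n \<Longrightarrow> \<omega> \<in> core_points r LL eps k \<Longrightarrow> L \<in> LL \<Longrightarrow> \<omega> \<notin> L \<Longrightarrow>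
      ball \<omega> (8 * eps k) \<inter> sphere_tube r L (eps k) = {}"
begin

lemma eps_le_r: "k < n \<Longrightarrow> eps k \<le> r / 13"
proof (induction k)
  case 0
  then show ?case
    using eps_0 by simp
next
  case (Suc k)
  have "eps (Suc k) \<le> eps k / 13"
    using eps_Suc Suc.prems .
  also have "\<dots> \<le> r / 13"
    using Suc eps_pos[of k] by simp
  finally show ?case .
qed

lemma eps_antimono: "j \<le> k \<Longrightarrow> k < n \<Longrightarrow> eps k \<le> eps j"
proof (induction k)
  case (Suc k)
  show ?case
  proof (cases "j = Suc k")
    case False
    then have "eps (Suc k) \<le> eps k"
      using eps_Suc[of k] eps_pos[of k] Suc.prems by simp
    with False Suc show ?thesis
      by simp
  qed simp
qed simp

lemma eps_less: "j < k \<Longrightarrow> k < n \<Longrightarrow> eps k \<le> eps j / 13"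
proof -
  assume "j < k" "k < n"
  then obtain k' where k: "k = Suc k'" "j \<le> k'"
    by (cases k) auto
  have "eps k \<le> eps k' / 13"
    using eps_Suc \<open>k < n\<close> k by simp
  also have "\<dots> \<le> eps j / 13"
    using eps_antimono k \<open>k < n\<close> by simp
  finally show ?thesis .
qed

text \<open>The tube radii are indexed by the dimension of the great sphere, here dim L - 1.\<close>
definition rad :: "'a set \<Rightarrow> real" where
  "rad L = eps (dim L - 1)"

lemma rad_pos: "0 < dim L \<Longrightarrow> dim L \<le> n \<Longrightarrow> 0 < rad L"
  unfolding rad_def by (rule eps_pos) simp

lemma rad_le_r: "0 < dim L \<Longrightarrow> dim L \<le> n \<Longrightarrow> rad L \<le> r / 13"
  unfolding rad_def by (rule eps_le_r) simp

lemma rad_antimono: "0 < dim L \<Longrightarrow> dim L \<le> dim L' \<Longrightarrow> dim L' \<le> n \<Longrightarrow> rad L' \<le> rad L"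
  unfolding rad_def by (rule eps_antimono) auto

lemma rad_less: "0 < dim L \<Longrightarrow> dim L < dim L' \<Longrightarrow> dim L' \<le> n \<Longrightarrow> rad L' \<le> rad L / 13"
  unfolding rad_def by (rule eps_less) auto

lemma mem_level_tubes:
  "p \<in> level_tubes r LL eps j \<longleftrightarrow> p \<in> sphere 0 r \<and> (\<exists>L\<in>LL. dim L = Suc j \<and> infdist p L < rad L)"
  by (auto simp: level_tubes_def sphere_tube_def rad_def)

lemma dim_less_LL: "L \<in> LL \<Longrightarrow> L' \<in> LL \<Longrightarrow> L \<subset> L' \<Longrightarrow> dim L < dim L'"
  by (intro dim_less_subspace subspace_LL)

lemma infdist_core_point_ge:
  assumes k: "k < n" and \<omega>: "\<omega> \<in> core_points r LL eps k" and L: "L \<in> LL" "\<omega> \<notin> L"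
  shows "6 * eps k \<le> infdist \<omega> L"
proof (rule ccontr)
  assume "\<not> ?thesis"
  then have close: "infdist \<omega> L < 6 * eps k"
    by simp
  have "norm \<omega> = r"
    using \<omega> by (auto simp: core_points_def)
  moreover have "6 * eps k \<le> r / 2"
    using eps_le_r[OF k] r_pos by simp
  moreover have "infdist \<omega> L < r"
    using close eps_le_r[OF k] r_pos by simp
  ultimately obtain Z where Z: "Z \<in> L" "norm Z = r"
    and "infdist \<omega> L \<le> r / 2 \<Longrightarrow> norm (\<omega> - Z) \<le> 5/4 * infdist \<omega> L"
    using great_sphere_projection[OF subspace_LL[OF L(1)]] by metis
  then have "norm (\<omega> - Z) \<le> 5/4 * infdist \<omega> L"
    using close \<open>6 * eps k \<le> r / 2\<close> by simp
  then have "Z \<in> ball \<omega> (8 * eps k)"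
    using close eps_pos[OF k] by (simp add: dist_norm)
  moreover have "Z \<in> sphere_tube r L (eps k)"
    using Z eps_pos[OF k] by (simp add: sphere_tube_def)
  ultimately show False
    using tubes_apart[OF k \<omega> L] by blast
qed

definition tube_nesting :: "'a set \<Rightarrow> bool" where
  "tube_nesting L' \<longleftrightarrow> (\<forall>y \<in> sphere 0 r. \<forall>L \<in> LL.
     infdist y L' < 5/4 * rad L' \<longrightarrow> infdist y L < 2 * rad L' \<longrightarrow> \<not> L' \<subseteq> L \<longrightarrow>
     0 < dim (L' \<inter> L) \<and> infdist y (L' \<inter> L) < 3/4 * rad (L' \<inter> L))"

lemma tube_nestingD:
  assumes "tube_nesting L'" "y \<in> sphere 0 r" "L \<in> LL"
    "infdist y L' < 5/4 * rad L'" "infdist y L < 2 * rad L'" "\<not> L' \<subseteq> L"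
  shows "0 < dim (L' \<inter> L)" "infdist y (L' \<inter> L) < 3/4 * rad (L' \<inter> L)"
  using assms unfolding tube_nesting_def by blast+

lemma tube_nesting_smaller_tube:
  assumes nest: "tube_nesting B" and p: "p \<in> sphere 0 r"
    and B: "B \<in> LL" "0 < dim B" "dim B \<le> n" "infdist p B < rad B"
    and L: "L \<in> LL" "infdist p L < 2 * rad B"
  obtains M where "M \<in> LL" "M \<subseteq> B \<inter> L" "0 < dim M" "infdist p M < rad M"
proof (cases "B \<subseteq> L")
  case True
  then show thesis
    using that[of B] B by auto
next
  case False
  have "infdist p B < 5/4 * rad B"
    using B rad_pos[of B] by simp
  note nested = tube_nestingD[OF nest p L(1) this L(2) False]
  have "dim (B \<inter> L) \<le> n"
    using dim_subset[of "B \<inter> L" B] B by simp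
  then have "infdist p (B \<inter> L) < rad (B \<inter> L)"
    using nested rad_pos[of "B \<inter> L"] by simp
  then show thesis
    using that[of "B \<inter> L"] Int_LL[OF B(1) L(1)] nested by simp
qed

definition deep_point :: "'a set \<Rightarrow> 'a \<Rightarrow> bool" where
  "deep_point L m \<longleftrightarrow> m \<in> L \<inter> sphere 0 r \<and>
     (\<forall>B \<in> LL. B \<subset> L \<longrightarrow> 0 < dim B \<longrightarrow> rad B \<le> infdist m B)"

lemma deep_point_in_core_points:
  assumes nest: "\<And>B. B \<in> LL \<Longrightarrow> 0 < dim B \<Longrightarrow> dim B < dim L \<Longrightarrow> tube_nesting B"
    and L: "L \<in> LL" "0 < dim L" "dim L \<le> n" and W: "deep_point L W"
  shows "W \<in> core_points r LL eps (dim L - 1)"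
proof -
  have W': "W \<in> L" "W \<in> sphere 0 r"
    using W by (auto simp: deep_point_def)
  have "W \<notin> level_tubes r LL eps j" if "j < dim L - 1" for j
  proof
    assume "W \<in> level_tubes r LL eps j"
    then obtain B where B: "B \<in> LL" "dim B = Suc j" "infdist W B < rad B"
      by (auto simp: mem_level_tubes)
    have dimB: "0 < dim B" "dim B < dim L"
      using that B by auto
    have "infdist W L < 2 * rad B"
      using W'(1) rad_pos[of B] dimB L by simp
    then obtain M where M: "M \<in> LL" "M \<subseteq> B \<inter> L" "0 < dim M" "infdist W M < rad M"
      using tube_nesting_smaller_tube[OF nest[OF B(1) dimB] W'(2) B(1) dimB(1) _ B(3) L(1)] dimB L
      by auto
    have "dim M < dim L"
      using dim_subset[of M B] M dimB by auto
    then have "M \<subset> L"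
      using M by auto
    then show False
      using W M by (force simp: deep_point_def)
  qed
  moreover have "\<exists>L'\<in>LL. dim L' = Suc (dim L - 1) \<and> W \<in> L' \<inter> sphere 0 r"
    using L W' by auto
  ultimately show ?thesis
    by (auto simp: core_points_def)
qed

lemma infdist_deep_point_ge:
  assumes nest: "\<And>B. B \<in> LL \<Longrightarrow> 0 < dim B \<Longrightarrow> dim B < dim L \<Longrightarrow> tube_nesting B"
    and L: "L \<in> LL" "0 < dim L" "dim L \<le> n" and W: "deep_point L W" and A: "A \<in> LL" "W \<notin> A"
  shows "6 * rad L \<le> infdist W A"
  using infdist_core_point_ge[OF _ deep_point_in_core_points[OF nest L W] A] L
  by (simp add: rad_def)

lemma deep_pointI_Int:
  assumes nest: "\<And>B. B \<in> LL \<Longrightarrow> 0 < dim B \<Longrightarrow> dim B < dim L \<Longrightarrow> tube_nesting B"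
    and L: "L \<in> LL" "dim L \<le> n" and A: "A \<in> LL" and W: "W \<in> L \<inter> sphere 0 r"
    and below: "\<And>B. B \<in> LL \<Longrightarrow> B \<subseteq> L \<inter> A \<Longrightarrow> 0 < dim B \<Longrightarrow> rad B \<le> infdist W B"
    and near: "\<And>B. B \<in> LL \<Longrightarrow> B \<subset> L \<Longrightarrow> 0 < dim B \<Longrightarrow> infdist W A < 2 * rad B"
  shows "deep_point L W"
  unfolding deep_point_def
proof (intro conjI ballI impI W)
  fix B
  assume B: "B \<in> LL" "B \<subset> L" "0 < dim B"
  have dimB: "dim B < dim L"
    using dim_less_LL B L by blast
  show "rad B \<le> infdist W B"
  proof (rule ccontr)
    assume "\<not> rad B \<le> infdist W B"
    then obtain M where M: "M \<in> LL" "M \<subseteq> B \<inter> A" "0 < dim M" "infdist W M < rad M"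
      using tube_nesting_smaller_tube[OF nest[OF B(1) B(3) dimB] _ B(1,3) _ _ A near[OF B]] W dimB L
      by auto
    then show False
      using below[of M] B(2) by auto
  qed
qed

lemma deep_point_tilt:
  assumes nest: "\<And>B. B \<in> LL \<Longrightarrow> 0 < dim B \<Longrightarrow> dim B < dim L \<Longrightarrow> tube_nesting B"
    and L: "L \<in> LL" "dim L \<le> n" and A: "A \<in> LL"
    and m: "deep_point (L \<inter> A) m" and v: "v \<in> L" "v \<in> (L \<inter> A)\<^sup>\<bottom>" "norm v = 1"
    and t: "rad (L \<inter> A) \<le> t" "t \<le> r"
    and near: "\<And>B. B \<in> LL \<Longrightarrow> B \<subset> L \<Longrightarrow> 0 < dim B \<Longrightarrow> t * infdist v A < 2 * rad B"
  shows "deep_point L (tilt r m t v)"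
proof -
  define M where "M = L \<inter> A"
  have M: "M \<in> LL" "subspace M" "M \<subseteq> L" "M \<subseteq> A"
    using Int_LL[OF L(1) A] subspace_LL by (auto simp: M_def)
  have m': "m \<in> M" "norm m = r"
    using m by (auto simp: deep_point_def M_def)
  then have "\<not> M \<subseteq> {0}"
    using r_pos by auto
  then have "0 < dim M" "dim M \<le> n"
    using dim_subset[OF M(3)] L by auto
  then have t0: "0 \<le> t"
    using rad_pos[of M] t by (simp add: M_def)
  let ?W = "tilt r m t v"
  have "?W \<in> L \<inter> sphere 0 r"
    using tilt_in_subspace[OF subspace_LL[OF L(1)]] norm_tilt[OF M(2) m'(1) _ m'(2)] m' M v t0 t r_pos
    by (auto simp: M_def)
  moreover have "rad B \<le> infdist ?W B" if B: "B \<in> LL" "B \<subseteq> M" "0 < dim B" for B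
  proof (cases "B = M")
    case True
    then show ?thesis
      using infdist_tilt_above[OF M(2) _ m'(1) t0, of r v] infdist_subspace_orthogonal[OF M(2)] v t
      by (simp add: M_def)
  next
    case False
    then have "rad B \<le> infdist m B"
      using m B by (auto simp: deep_point_def M_def)
    also have "\<dots> \<le> infdist ?W B"
      using infdist_tilt_below[OF subspace_LL[OF B(1)] M(2) B(2) m' _ v(3) r_pos t0 t(2)] v
      by (simp add: M_def)
    finally show ?thesis .
  qed
  moreover have "infdist ?W A = t * infdist v A"
    using infdist_tilt_above[OF subspace_LL[OF A] M(4) m'(1) t0] .
  ultimately show ?thesis
    using deep_pointI_Int[OF nest L A] near unfolding M_def by auto
qed

lemma deep_point_exists_step:
  assumes nest: "\<And>B. B \<in> LL \<Longrightarrow> 0 < dim B \<Longrightarrow> dim B < dim L \<Longrightarrow> tube_nesting B"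
    and deep: "\<And>B. B \<in> LL \<Longrightarrow> 0 < dim B \<Longrightarrow> dim B < dim L \<Longrightarrow> \<exists>m. deep_point B m"
    and L: "L \<in> LL" "0 < dim L" "dim L \<le> n"
  shows "\<exists>W. deep_point L W"
proof (cases "\<exists>C\<in>LL. C \<subset> L \<and> 0 < dim C")
  case False
  obtain x where "x \<in> L" "norm x = r"
    using sphere_point_in_subspace[OF subspace_LL[OF L(1)] L(2) less_imp_le[OF r_pos]] by blast
  then have "x \<in> L \<inter> sphere 0 r"
    by simp
  then have "deep_point L x"
    using False unfolding deep_point_def by blast
  then show ?thesis ..
next
  case True
  then obtain C where C: "C \<in> LL" "C \<subset> L" "0 < dim C"
    and C_max: "\<And>B. B \<in> LL \<Longrightarrow> B \<subset> L \<Longrightarrow> 0 < dim B \<Longrightarrow> dim B \<le> dim C"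
    using ex_has_greatest_nat[of "\<lambda>C. C \<in> LL \<and> C \<subset> L \<and> 0 < dim C" _ dim "dim L"] dim_less_LL L(1)
    by metis
  have dimC: "dim C < dim L" "dim C \<le> n"
    using dim_less_LL[OF C(1) L(1) C(2)] L by auto
  obtain m where m: "deep_point C m"
    using deep C dimC by blast
  obtain v where v: "v \<in> L" "v \<in> C\<^sup>\<bottom>" "norm v = 1"
    using unit_orthogonal_exists[OF subspace_LL[OF C(1)] subspace_LL[OF L(1)] C(2)] by blast
  have LC: "L \<inter> C = C"
    using C by auto
  have "rad C \<le> r"
    using rad_le_r[OF C(3) dimC(2)] r_pos by simp
  moreover have "rad C * infdist v C < 2 * rad B" if "B \<in> LL" "B \<subset> L" "0 < dim B" for B
  proof -
    have "rad C \<le> rad B"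
      using C_max[OF that] that(3) dimC by (intro rad_antimono) auto
    then show ?thesis
      using infdist_subspace_orthogonal[OF subspace_LL[OF C(1)] v(2)] v(3) rad_pos[OF C(3) dimC(2)]
      by simp
  qed
  ultimately have "deep_point L (tilt r m (rad C) v)"
    using deep_point_tilt[OF nest L(1,3) C(1)] m v by (simp add: LC)
  then show ?thesis ..
qed

lemma infdist_orthogonal_direction_ge:
  assumes nest: "\<And>B. B \<in> LL \<Longrightarrow> 0 < dim B \<Longrightarrow> dim B < dim L \<Longrightarrow> tube_nesting B"
    and L: "L \<in> LL" "0 < dim L" "dim L \<le> n" and A: "A \<in> LL"
    and m: "deep_point (L \<inter> A) m" and v: "v \<in> L" "v \<in> (L \<inter> A)\<^sup>\<bottom>" "norm v = 1"
    and t: "rad (L \<inter> A) \<le> t" "t \<le> r"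
  shows "6 * rad L \<le> t * infdist v A"
proof (rule ccontr)
  assume "\<not> ?thesis"
  then have tv: "t * infdist v A < 6 * rad L"
    by simp
  \<comment> \<open>Then the tilted point is a deep point of L, hence in Omega, but too close to A.\<close>
  have "t * infdist v A < 2 * rad B" if "B \<in> LL" "B \<subset> L" "0 < dim B" for B
    using tv rad_less[OF that(3) dim_less_LL[OF that(1) L(1) that(2)] L(3)] rad_pos[OF L(2,3)] by simp
  then have W: "deep_point L (tilt r m t v)"
    using deep_point_tilt[OF nest L(1,3) A m v t] by simp
  have "v \<notin> A"
  proof
    assume "v \<in> A"
    then have "v \<in> (L \<inter> A) \<inter> (L \<inter> A)\<^sup>\<bottom>"
      using v by auto
    then show False
      using orthogonal_Int_0[OF subspace_LL[OF Int_LL[OF L(1) A]]] v(3) by auto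
  qed
  moreover have "closed A" "A \<noteq> {}"
    using subspace_LL[OF A] by (auto intro: closed_subspace dest: subspace_0)
  ultimately have "0 < infdist v A"
    by (intro infdist_pos_not_in_closed)
  have "dim (L \<inter> A) - 1 < n"
    using dim_subset[of "L \<inter> A" L] L by auto
  then have "0 < t"
    using eps_pos t(1) unfolding rad_def by fastforce
  have Wm: "m \<in> L \<inter> A"
    using m by (simp add: deep_point_def)
  then have "infdist (tilt r m t v) A = t * infdist v A"
    using infdist_tilt_above[OF subspace_LL[OF A] _ Wm, of t r v] \<open>0 < t\<close> by auto
  moreover have "tilt r m t v \<notin> A"
    using \<open>0 < infdist v A\<close> \<open>0 < t\<close> calculation by auto
  ultimately show False
    using infdist_deep_point_ge[OF nest L W A] tv by simp
qed

lemma great_sphere_near_Int_dim_pos: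
  assumes nest: "\<And>B. B \<in> LL \<Longrightarrow> 0 < dim B \<Longrightarrow> dim B < dim L \<Longrightarrow> tube_nesting B"
    and L: "L \<in> LL" "0 < dim L" "dim L \<le> n" and A: "A \<in> LL" "\<not> L \<subseteq> A"
    and \<Omega>: "\<Omega> \<in> L \<inter> sphere 0 r" and close: "infdist \<Omega> A < 6 * rad L"
  shows "0 < dim (L \<inter> A)"
proof (rule ccontr)
  assume "\<not> 0 < dim (L \<inter> A)"
  then have M0: "L \<inter> A \<subseteq> {0}"
    by simp
  have "deep_point L \<Omega>"
  proof (rule deep_pointI_Int[OF nest L(1,3) A(1) \<Omega>])
    fix B
    assume B: "B \<in> LL" "B \<subseteq> L \<inter> A" "0 < dim B"
    then have "B \<subseteq> {0}"
      using M0 by auto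
    then have "dim B = 0"
      by simp
    with B(3) show "rad B \<le> infdist \<Omega> B"
      by simp
  next
    fix B
    assume B: "B \<in> LL" "B \<subset> L" "0 < dim B"
    have "6 * rad L \<le> 2 * rad B"
      using rad_less[OF B(3) dim_less_LL[OF B(1) L(1) B(2)] L(3)] rad_pos[OF L(2,3)] by simp
    then show "infdist \<Omega> A < 2 * rad B"
      using close by simp
  qed
  moreover have "\<Omega> \<notin> A"
    using \<Omega> M0 r_pos by auto
  ultimately have "6 * rad L \<le> infdist \<Omega> A"
    using infdist_deep_point_ge[OF nest L] A(1) by blast
  then show False
    using close by simp
qed

lemma great_sphere_near_Int:
  assumes nest: "\<And>B. B \<in> LL \<Longrightarrow> 0 < dim B \<Longrightarrow> dim B < dim L \<Longrightarrow> tube_nesting B"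
    and deep: "\<And>B. B \<in> LL \<Longrightarrow> 0 < dim B \<Longrightarrow> dim B < dim L \<Longrightarrow> \<exists>m. deep_point B m"
    and L: "L \<in> LL" "0 < dim L" "dim L \<le> n" and A: "A \<in> LL" "\<not> L \<subseteq> A"
    and \<Omega>: "\<Omega> \<in> L \<inter> sphere 0 r" and close: "infdist \<Omega> A < 57/16 * rad L"
  shows "infdist \<Omega> (L \<inter> A) \<le> 3/5 * rad (L \<inter> A)"
proof (rule ccontr)
  define M where "M = L \<inter> A"
  define \<delta> where "\<delta> = infdist \<Omega> M"
  assume "\<not> ?thesis"
  then have \<delta>_big: "3/5 * rad M < \<delta>"
    by (simp add: \<delta>_def M_def)
  have M: "M \<in> LL" "subspace M" "M \<subset> L" "M \<subseteq> A"
    using Int_LL[OF L(1) A(1)] subspace_LL A(2) by (auto simp: M_def)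
  have radL: "0 < rad L"
    using rad_pos L by simp
  have dimM: "0 < dim M" "dim M < dim L" "dim M \<le> n"
    using great_sphere_near_Int_dim_pos[OF nest L A \<Omega>] close radL dim_less_LL[OF M(1) L(1) M(3)] L(3)
    by (auto simp: M_def)
  have radM: "0 < rad M" "rad M \<le> r"
    using rad_pos[OF dimM(1,3)] rad_le_r[OF dimM(1,3)] r_pos by auto
  then have \<delta>_pos: "0 < \<delta>"
    using \<delta>_big by simp
  then obtain p v where p: "p \<in> M" and v: "v \<in> L" "v \<in> M\<^sup>\<bottom>" "norm v = 1"
    and \<Omega>_eq: "\<Omega> = p + \<delta> *\<^sub>R v"
    using closest_point_decomposition[OF M(2) subspace_LL[OF L(1)]] M(3) \<Omega> unfolding \<delta>_def by blast
  have "\<delta> \<le> r"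
    using infdist_le[of 0 M \<Omega>] M(2) \<Omega> by (simp add: \<delta>_def subspace_0)
  define t where "t = max \<delta> (rad M)"
  have t: "rad M \<le> t" "t \<le> r" "t \<le> 5/3 * \<delta>"
    using \<delta>_big radM \<open>\<delta> \<le> r\<close> by (auto simp: t_def)
  have "p \<in> A"
    using p M(4) by blast
  then have "infdist \<Omega> A = \<delta> * infdist v A"
    using infdist_subspace_add_mem[OF subspace_LL[OF A(1)]]
      infdist_subspace_scaleR[OF subspace_LL[OF A(1)], of \<delta> v] \<delta>_pos
    by (simp add: \<Omega>_eq)
  moreover obtain m where "deep_point M m"
    using deep M(1) dimM by blast
  then have "6 * rad L \<le> t * infdist v A"
    using infdist_orthogonal_direction_ge[OF nest L A(1)] v t(1,2) by (simp add: M_def)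
  ultimately show False
    using close t(3) infdist_nonneg[of v A] mult_right_mono[OF t(3), of "infdist v A"] radL by simp
qed

lemma tube_nesting_step:
  assumes nest: "\<And>B. B \<in> LL \<Longrightarrow> 0 < dim B \<Longrightarrow> dim B < dim L \<Longrightarrow> tube_nesting B"
    and deep: "\<And>B. B \<in> LL \<Longrightarrow> 0 < dim B \<Longrightarrow> dim B < dim L \<Longrightarrow> \<exists>m. deep_point B m"
    and L: "L \<in> LL" "0 < dim L" "dim L \<le> n"
  shows "tube_nesting L"
  unfolding tube_nesting_def
proof (intro ballI impI)
  fix y A
  assume y: "y \<in> sphere 0 r" and A: "A \<in> LL" and yL: "infdist y L < 5/4 * rad L"
    and yA: "infdist y A < 2 * rad L" and LA: "\<not> L \<subseteq> A"
  have radL: "0 < rad L" "rad L \<le> r / 13"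
    using rad_pos[OF L(2,3)] rad_le_r[OF L(2,3)] by auto
  then have "infdist y L \<le> r / 2" "infdist y L < r"
    using yL r_pos by auto
  then obtain \<Omega> where \<Omega>: "\<Omega> \<in> L" "norm \<Omega> = r" "norm (y - \<Omega>) \<le> 5/4 * infdist y L"
    using great_sphere_projection[OF subspace_LL[OF L(1)]] y by (metis mem_sphere_0)
  have y\<Omega>: "dist y \<Omega> < 25/16 * rad L"
    using \<Omega>(3) yL by (simp add: dist_norm)
  have "infdist \<Omega> A \<le> infdist y A + dist \<Omega> y"
    by (rule infdist_triangle)
  then have "infdist \<Omega> A < 57/16 * rad L"
    using yA y\<Omega> by (simp add: dist_commute)
  note close = this
  have dim_pos: "0 < dim (L \<inter> A)"
    using great_sphere_near_Int_dim_pos[OF nest L A LA _] close \<Omega> rad_pos[OF L(2,3)] by simp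
  have "rad L \<le> rad (L \<inter> A) / 13"
    using rad_less[OF dim_pos _ L(3)] dim_less_LL[OF Int_LL[OF L(1) A] L(1)] LA by auto
  have "infdist y (L \<inter> A) \<le> infdist \<Omega> (L \<inter> A) + dist y \<Omega>"
    by (rule infdist_triangle)
  also have "\<dots> < 3/5 * rad (L \<inter> A) + 25/16 * rad L"
    using great_sphere_near_Int[OF nest deep L A LA _ close] \<Omega> y\<Omega> by simp
  also have "\<dots> < 3/4 * rad (L \<inter> A)"
    using \<open>rad L \<le> rad (L \<inter> A) / 13\<close> radL by simp
  finally show "0 < dim (L \<inter> A) \<and> infdist y (L \<inter> A) < 3/4 * rad (L \<inter> A)"
    using dim_pos by simp
qed

lemma tube_nesting_and_deep_point:
  assumes "L \<in> LL" "0 < dim L" "dim L \<le> n"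
  shows "tube_nesting L \<and> (\<exists>m. deep_point L m)"
  using assms
proof (induction "dim L" arbitrary: L rule: less_induct)
  case less
  have "tube_nesting B \<and> (\<exists>m. deep_point B m)"
    if "B \<in> LL" "0 < dim B" "dim B < dim L" for B
    using less that by auto
  then show ?case
    using tube_nesting_step deep_point_exists_step less.prems by blast
qed

lemma tube_nesting: "L \<in> LL \<Longrightarrow> 0 < dim L \<Longrightarrow> dim L \<le> n \<Longrightarrow> tube_nesting L"
  using tube_nesting_and_deep_point by blast

section \<open>Admissible caps\<close>

definition admissible_cap :: "'a \<Rightarrow> nat \<Rightarrow> 'a set \<Rightarrow> 'a \<Rightarrow> bool" where
  "admissible_cap X k L Z \<longleftrightarrow> L \<in> LL \<and> dim L = Suc k \<and> Z \<in> L \<inter> sphere 0 r \<and>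
     X \<in> sphere_cap r L Z (eps k) \<and>
     sphere_cap_boundary r L Z (eps k) \<inter> (\<Union>j<k. level_tubes r LL eps j) = {}"

lemma admissible_cap_same_subspace:
  assumes k: "k < n" and cap1: "admissible_cap X k L1 Z1" and cap2: "admissible_cap X k L2 Z2"
  shows "L1 = L2"
proof (rule ccontr)
  assume "L1 \<noteq> L2"
  have L: "L1 \<in> LL" "L2 \<in> LL" "dim L1 = Suc k" "dim L2 = Suc k" "Z1 \<in> L1" "norm Z1 = r"
    using cap1 cap2 by (auto simp: admissible_cap_def)
  then have "\<not> L1 \<subseteq> L2"
    using \<open>L1 \<noteq> L2\<close> subspace_dim_equal[of L1 L2] subspace_LL by auto
  have radL1: "rad L1 = eps k" "0 < eps k" "eps k < r"
    using L eps_pos[OF k] eps_le_r[OF k] r_pos by (auto simp: rad_def)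
  obtain t1 u1 where X1: "X = t1 *\<^sub>R Z1 + u1" "u1 \<in> L1\<^sup>\<bottom>" "norm u1 < eps k" "norm X = r"
    using cap1 by (auto simp: admissible_cap_def sphere_cap_def)
  obtain t2 u2 where X2: "X = t2 *\<^sub>R Z2 + u2" "u2 \<in> L2\<^sup>\<bottom>" "norm u2 < eps k" "Z2 \<in> L2"
    using cap2 by (auto simp: admissible_cap_def sphere_cap_def)
  have "infdist X L1 = norm u1" "infdist X L2 = norm u2"
    using infdist_scaleR_add_orthogonal_comp subspace_LL X1 X2 L by metis+
  then have "infdist X L1 < 5/4 * rad L1" "infdist X L2 < 2 * rad L1"
    using X1 X2 radL1 by auto
  note nested = tube_nestingD[OF tube_nesting[OF L(1) _ _] _ L(2) this \<open>\<not> L1 \<subseteq> L2\<close>]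
  define M where "M = L1 \<inter> L2"
  have M: "M \<in> LL" "M \<subseteq> L1" "0 < dim M" "dim M < dim L1" "infdist X M < 3/4 * rad M"
    using nested X1(4) L k Int_LL[OF L(1,2)] dim_less_LL[OF Int_LL[OF L(1,2)] L(1)] \<open>\<not> L1 \<subseteq> L2\<close>
    by (auto simp: M_def)
  have "eps k \<le> rad M / 13"
    using rad_less[OF M(3,4)] L k radL1 by simp
  have "L1 \<noteq> UNIV"
    using L(3) k n_less_DIM by auto
  then obtain P where P: "P \<in> sphere_cap_boundary r L1 Z1 (eps k)"
    and P_close: "(infdist P M)\<^sup>2 \<le> (infdist X M)\<^sup>2 + (eps k)\<^sup>2"
    using sphere_cap_boundary_point[OF subspace_LL[OF M(1)] subspace_LL[OF L(1)] _ M(2) L(5,6)]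
      cap1 radL1 by (auto simp: admissible_cap_def)
  have "infdist P M < rad M"
    using hypot_less[OF P_close infdist_nonneg M(5)] \<open>eps k \<le> rad M / 13\<close> radL1 by simp
  then have "P \<in> level_tubes r LL eps (dim M - 1)"
    using P M by (auto simp: mem_level_tubes sphere_cap_boundary_def)
  moreover have "dim M - 1 < k"
    using M L by simp
  ultimately show False
    using P cap1 by (auto simp: admissible_cap_def)
qed

lemma admissible_cap_unique:
  assumes k: "k < n" and cap1: "admissible_cap X k L1 Z1" and cap2: "admissible_cap X k L2 Z2"
  shows "L1 = L2 \<and> Z1 = Z2"
proof -
  have L: "L1 = L2"
    using admissible_cap_same_subspace[OF k cap1 cap2] .
  obtain t1 u1 where X1: "0 < t1" "X = t1 *\<^sub>R Z1 + u1" "u1 \<in> L1\<^sup>\<bottom>"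
    using cap1 by (auto simp: admissible_cap_def sphere_cap_def)
  obtain t2 u2 where X2: "0 < t2" "X = t2 *\<^sub>R Z2 + u2" "u2 \<in> L2\<^sup>\<bottom>"
    using cap2 by (auto simp: admissible_cap_def sphere_cap_def)
  have "Z1 \<in> L1" "Z2 \<in> L1" "norm Z1 = r" "norm Z2 = r" "subspace L1"
    using cap1 cap2 L subspace_LL by (auto simp: admissible_cap_def)
  then have "Z1 = Z2"
    using sphere_cap_top_unique[of L1 Z1 Z2 r t1 t2 u1 u2] X1 X2 L r_pos by simp
  with L show ?thesis ..
qed

lemma sphere_cap_boundary_avoids_lower_tubes:
  assumes j: "j < n" and L: "L \<in> LL" "dim L = Suc j" and Z: "Z \<in> L" "norm Z = r"
    and X: "X \<in> sphere_cap r L Z (eps j)" and low: "\<And>i. i < j \<Longrightarrow> X \<notin> level_tubes r LL eps i"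
  shows "sphere_cap_boundary r L Z (eps j) \<inter> (\<Union>i<j. level_tubes r LL eps i) = {}"
proof -
  have "p \<notin> level_tubes r LL eps i" if p: "p \<in> sphere_cap_boundary r L Z (eps j)" and i: "i < j" for p i
  proof
    assume "p \<in> level_tubes r LL eps i"
    then obtain B where B: "B \<in> LL" "dim B = Suc i" "infdist p B < rad B"
      by (auto simp: mem_level_tubes)
    obtain t' u' where P: "p = t' *\<^sub>R Z + u'" "u' \<in> L\<^sup>\<bottom>" "norm u' = eps j" "norm p = r"
      using p by (auto simp: sphere_cap_boundary_def)
    obtain t u where X': "X = t *\<^sub>R Z + u" "u \<in> L\<^sup>\<bottom>" "norm u < eps j" "norm X = r"
      using X by (auto simp: sphere_cap_def)
    have radB: "0 < rad B" "eps j \<le> rad B / 13"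
      using B i j rad_pos[of B] eps_less[of i j] by (auto simp: rad_def)
    have "infdist p L = eps j"
      using infdist_scaleR_add_orthogonal_comp[OF subspace_LL[OF L(1)] Z(1) P(2)] P by simp
    then have "infdist p L < 2 * rad B"
      using radB by simp
    then obtain M where M: "M \<in> LL" "M \<subseteq> B \<inter> L" "0 < dim M" "infdist p M < rad M"
      using tube_nesting_smaller_tube[OF tube_nesting _ B(1) _ _ B(3) L(1)] B i j P(4) by auto
    have "infdist X M \<le> infdist p M"
      using infdist_cap_mono(1)[OF subspace_LL[OF M(1)] subspace_LL[OF L(1)] _ Z r_pos X'(2) P(2)]
        M(2) X' P by auto
    then have "X \<in> level_tubes r LL eps (dim M - 1)"
      using M X' by (auto simp: mem_level_tubes)
    moreover have "dim M - 1 < j"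
      using dim_subset[of M B] M B i by auto
    ultimately show False
      using low by blast
  qed
  then show ?thesis
    by blast
qed

lemma admissible_cap_exists:
  assumes "X \<in> (\<Union>j<n. level_tubes r LL eps j)"
  shows "\<exists>k<n. \<exists>L Z. admissible_cap X k L Z"
proof -
  obtain j where j: "j < n" "X \<in> level_tubes r LL eps j"
    and low: "\<And>i. i < j \<Longrightarrow> X \<notin> level_tubes r LL eps i"
    using assms exists_least_iff[of "\<lambda>j. j < n \<and> X \<in> level_tubes r LL eps j"] by force
  then obtain L where L: "L \<in> LL" "dim L = Suc j" "infdist X L < eps j" "norm X = r"
    by (auto simp: mem_level_tubes rad_def)
  moreover have "infdist X L < r"
    using L eps_le_r[OF j(1)] r_pos by simp
  ultimately obtain t Z where Z: "Z \<in> L" "norm Z = r" "0 < t" "X - t *\<^sub>R Z \<in> L\<^sup>\<bottom>"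
    using great_sphere_projection[OF subspace_LL[OF L(1)]] by metis
  have "infdist X L = norm (X - t *\<^sub>R Z)"
    using infdist_scaleR_add_orthogonal_comp[OF subspace_LL[OF L(1)] Z(1) Z(4), of t] by simp
  then have X: "X \<in> sphere_cap r L Z (eps j)"
    unfolding sphere_cap_def using L Z by (intro CollectI conjI exI[of _ t] exI[of _ "X - t *\<^sub>R Z"]) auto
  have "admissible_cap X j L Z"
    unfolding admissible_cap_def
    using L Z X sphere_cap_boundary_avoids_lower_tubes[OF j(1) L(1,2) Z(1,2) X low] by simp
  then show ?thesis
    using j(1) by blast
qed

end

section \<open>Hyperplanes through the centre\<close>

lemma Walpha_eq_orthogonal_comp: "Walpha c A = (Lalpha c A)\<^sup>\<bottom>"
  by (simp add: Walpha_def orthogonal_comp_def orthogonal_def)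

lemma diff_mem_Lalpha_iff: "p - c \<in> Lalpha c A \<longleftrightarrow> p \<in> Valpha A"
  by (force simp: Lalpha_def)

lemma dist_eq_norm_diff:
  fixes p c :: "'a::real_normed_vector"
  shows "dist c p = norm (p - c)"
  by (simp add: dist_norm norm_minus_commute)

lemma Lalpha_Un: "Lalpha c (A \<union> B) = Lalpha c A \<inter> Lalpha c B"
  by (auto simp: Lalpha_def Valpha_def)

lemma subspace_Lalpha:
  assumes "\<forall>V\<in>A. affine V \<and> c \<in> V"
  shows "subspace (Lalpha c A)"
  unfolding Lalpha_def
  using assms by (intro affine_diffs_subspace_subtract) (auto simp: Valpha_def)

lemma gdim_Lalpha:
  assumes "\<forall>V\<in>A. affine V \<and> c \<in> V"
  shows "gdim A = int (dim (Lalpha c A)) - 1"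
  using aff_dim_subspace[OF subspace_Lalpha[OF assms]] aff_dim_translation_eq_subtract[of c "Valpha A"]
  by (simp add: gdim_def Lalpha_def)

lemma tube_eq_sphere_tube:
  assumes "subspace (Lalpha c A)"
  shows "p \<in> tube c r A e \<longleftrightarrow> p - c \<in> sphere_tube r (Lalpha c A) e"
proof -
  let ?L = "Lalpha c A"
  have "(\<exists>a u. p - c = a + u \<and> a \<in> ?L \<and> u \<in> ?L\<^sup>\<bottom> \<and> norm u < e) \<longleftrightarrow> infdist (p - c) ?L < e"
  proof
    assume "\<exists>a u. p - c = a + u \<and> a \<in> ?L \<and> u \<in> ?L\<^sup>\<bottom> \<and> norm u < e"
    then show "infdist (p - c) ?L < e"
      using infdist_subspace_eq[OF assms] by force
  next
    assume "infdist (p - c) ?L < e"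
    then show "\<exists>a u. p - c = a + u \<and> a \<in> ?L \<and> u \<in> ?L\<^sup>\<bottom> \<and> norm u < e"
      using closest_point_in_subspace[OF assms] closest_point_subspace_orthogonal[OF assms]
        infdist_subspace_closest_point[OF assms]
      by (intro exI[of _ "closest_point ?L (p - c)"] exI[of _ "p - c - closest_point ?L (p - c)"]) auto
  qed
  then show ?thesis
    by (simp add: tube_def sphere_tube_def Walpha_eq_orthogonal_comp dist_eq_norm_diff)
qed

lemma cap_eq_sphere_cap: "p \<in> cap c r A z e \<longleftrightarrow> p - c \<in> sphere_cap r (Lalpha c A) (z - c) e"
  by (simp add: cap_def sphere_cap_def Walpha_eq_orthogonal_comp dist_eq_norm_diff)

lemma cap_rel_boundary_eq_sphere_cap_boundary:
  "p \<in> cap_rel_boundary c r A z e \<longleftrightarrow> p - c \<in> sphere_cap_boundary r (Lalpha c A) (z - c) e"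
  by (simp add: cap_rel_boundary_def sphere_cap_boundary_def Walpha_eq_orthogonal_comp dist_eq_norm_diff)

lemma tau_le: "tau \<le> 1 / 13"
proof -
  have "(137 / 169)\<^sup>2 \<le> (2 / 3 :: real)"
    by (simp add: power2_eq_square)
  then have "137 / 169 \<le> sqrt (2 / 3 :: real)"
    by (rule real_le_rsqrt)
  then have "2 - 2 * sqrt (2 / 3) \<le> (8 / 13 :: real)\<^sup>2"
    by (simp add: power2_eq_square)
  then have "sqrt (2 - 2 * sqrt (2 / 3)) \<le> (8 / 13 :: real)"
    using real_sqrt_le_mono by fastforce
  then show ?thesis
    by (simp add: tau_def)
qed

locale central_arrangement =
  fixes c :: "'a::euclidean_space" and r :: real and VV :: "'a set set"
    and n :: nat and eps :: "nat \<Rightarrow> real"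
  assumes DIM: "DIM('a) = n + 1" and r_pos: "0 < r"
    and VV: "\<forall>V\<in>VV. affine V \<and> c \<in> V"
    and good: "good_eps c r VV n eps"
begin

lemma subspace_Lalpha_VV: "A \<subseteq> VV \<Longrightarrow> subspace (Lalpha c A)"
  using VV by (intro subspace_Lalpha) blast

lemma gdim_Lalpha_VV: "A \<subseteq> VV \<Longrightarrow> gdim A = int (dim (Lalpha c A)) - 1"
  using VV by (intro gdim_Lalpha) blast

lemma bigT_eq_level_tubes:
  "p \<in> bigT c r VV eps j \<longleftrightarrow> p - c \<in> level_tubes r (Lalpha c ` Pow VV) eps j"
proof -
  have "p \<in> bigT c r VV eps j \<longleftrightarrow> (\<exists>A. A \<subseteq> VV \<and> gdim A = int j \<and> p \<in> tube c r A (eps j))"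
    by (auto simp: bigT_def)
  also have "\<dots> \<longleftrightarrow> (\<exists>A. A \<subseteq> VV \<and> dim (Lalpha c A) = Suc j \<and>
      p - c \<in> sphere_tube r (Lalpha c A) (eps j))"
    by (auto simp: gdim_Lalpha_VV tube_eq_sphere_tube subspace_Lalpha_VV)
  also have "\<dots> \<longleftrightarrow> p - c \<in> level_tubes r (Lalpha c ` Pow VV) eps j"
    by (auto simp: level_tubes_def)
  finally show ?thesis .
qed

lemma Omega_eq_core_points:
  "p \<in> Omega c r VV eps k \<longleftrightarrow> p - c \<in> core_points r (Lalpha c ` Pow VV) eps k"
proof -
  have "p \<in> Omega c r VV eps k \<longleftrightarrow>
      (\<exists>A. A \<subseteq> VV \<and> gdim A = int k \<and> p \<in> Salpha c r A) \<and> (\<forall>j<k. p \<notin> bigT c r VV eps j)"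
    by (auto simp: Omega_def)
  also have "\<dots> \<longleftrightarrow> (\<exists>A. A \<subseteq> VV \<and> dim (Lalpha c A) = Suc k \<and> p - c \<in> Lalpha c A \<inter> sphere 0 r) \<and>
      (\<forall>j<k. p - c \<notin> level_tubes r (Lalpha c ` Pow VV) eps j)"
    by (auto simp: gdim_Lalpha_VV Salpha_def diff_mem_Lalpha_iff dist_eq_norm_diff bigT_eq_level_tubes)
  also have "\<dots> \<longleftrightarrow> p - c \<in> core_points r (Lalpha c ` Pow VV) eps k"
    by (auto simp: core_points_def)
  finally show ?thesis .
qed

lemma good_eps_pos: "k < n \<Longrightarrow> 0 < eps k"
  using good by (simp add: good_eps_def)

lemma good_eps_0: "eps 0 \<le> r / 13"
proof -
  have "eps 0 \<le> tau * r"
    using good by (simp add: good_eps_def)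
  also have "\<dots> \<le> r / 13"
    using mult_right_mono[OF tau_le, of r] r_pos by simp
  finally show ?thesis .
qed

lemma good_eps_Suc: "Suc k < n \<Longrightarrow> eps (Suc k) \<le> eps k / 13"
proof -
  assume k: "Suc k < n"
  then have "0 < eps k"
    using good_eps_pos by simp
  moreover have "eps (Suc k) / eps (Suc k - 1) \<le> tau"
    using good k unfolding good_eps_def by blast
  ultimately have "eps (Suc k) \<le> tau * eps k"
    by (simp add: divide_le_eq)
  also have "\<dots> \<le> eps k / 13"
    using mult_right_mono[OF tau_le, of "eps k"] \<open>0 < eps k\<close> by simp
  finally show ?thesis .
qed

lemma good_eps_tubes_apart:
  assumes k: "k < n" and \<omega>: "\<omega> \<in> core_points r (Lalpha c ` Pow VV) eps k"
    and L: "L \<in> Lalpha c ` Pow VV" "\<omega> \<notin> L"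
  shows "ball \<omega> (8 * eps k) \<inter> sphere_tube r L (eps k) = {}"
proof -
  obtain A where A: "A \<subseteq> VV" "L = Lalpha c A"
    using L by blast
  have "c + \<omega> \<in> Omega c r VV eps k"
    using \<omega> Omega_eq_core_points[of "c + \<omega>"] by simp
  moreover obtain V where "V \<in> A" "c + \<omega> \<notin> V"
    using L A diff_mem_Lalpha_iff[of "c + \<omega>" c A] by (auto simp: Valpha_def)
  then have "\<exists>V\<in>VV. Valpha A \<subseteq> V \<and> V \<notin> Vx VV (c + \<omega>)"
    using A by (auto simp: Valpha_def Vx_def)
  ultimately have apart: "ball (c + \<omega>) (8 * eps k) \<inter> tube c r A (eps k) = {}"
    using good k A by (simp add: good_eps_def)
  show ?thesis
  proof (rule equals0I)
    fix q
    assume "q \<in> ball \<omega> (8 * eps k) \<inter> sphere_tube r L (eps k)"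
    then have "c + q \<in> ball (c + \<omega>) (8 * eps k) \<inter> tube c r A (eps k)"
      using tube_eq_sphere_tube[OF subspace_Lalpha_VV[OF A(1)], of "c + q"] A by (simp add: dist_norm)
    then show False
      using apart by blast
  qed
qed

end

sublocale central_arrangement \<subseteq> great_sphere_arrangement r "Lalpha c ` Pow VV" n eps
proof unfold_locales
  show "subspace L" if "L \<in> Lalpha c ` Pow VV" for L
    using that subspace_Lalpha_VV by blast
  show "L \<inter> L' \<in> Lalpha c ` Pow VV" if "L \<in> Lalpha c ` Pow VV" "L' \<in> Lalpha c ` Pow VV" for L L'
    using that by (auto simp flip: Lalpha_Un)
qed (use r_pos DIM good_eps_pos good_eps_0 good_eps_Suc good_eps_tubes_apart in auto)

context central_arrangement
begin

lemma cap_prop_iff: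
  "cap_prop c r VV eps x k A z \<longleftrightarrow> A \<subseteq> VV \<and> admissible_cap (x - c) k (Lalpha c A) (z - c)"
proof -
  have boundary: "cap_rel_boundary c r A z (eps k) \<inter> (\<Union>j<k. bigT c r VV eps j) = {} \<longleftrightarrow>
    sphere_cap_boundary r (Lalpha c A) (z - c) (eps k) \<inter> (\<Union>j<k. level_tubes r (Lalpha c ` Pow VV) eps j) = {}"
    using cap_rel_boundary_eq_sphere_cap_boundary[of "c + _"] bigT_eq_level_tubes[of "c + _"]
      cap_rel_boundary_eq_sphere_cap_boundary bigT_eq_level_tubes by fastforce
  show ?thesis
    unfolding cap_prop_def admissible_cap_def boundary
    by (auto simp: gdim_Lalpha_VV Salpha_def diff_mem_Lalpha_iff dist_eq_norm_diff cap_eq_sphere_cap)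
qed

lemma cap_prop_exists:
  assumes "x \<in> (\<Union>j<n. bigT c r VV eps j)"
  shows "\<exists>k<n. \<exists>A z. cap_prop c r VV eps x k A z"
proof -
  have "x - c \<in> (\<Union>j<n. level_tubes r (Lalpha c ` Pow VV) eps j)"
    using assms bigT_eq_level_tubes by blast
  then obtain k L Z where "k < n" "admissible_cap (x - c) k L Z"
    using admissible_cap_exists by blast
  moreover obtain A where "A \<subseteq> VV" "L = Lalpha c A"
    using \<open>admissible_cap (x - c) k L Z\<close> by (auto simp: admissible_cap_def)
  ultimately have "cap_prop c r VV eps x k A (c + Z)"
    by (simp add: cap_prop_iff)
  then show ?thesis
    using \<open>k < n\<close> by blast
qed

lemma cap_prop_unique:
  assumes "k < n" "cap_prop c r VV eps x k A1 z1" "cap_prop c r VV eps x k A2 z2"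
  shows "Salpha c r A1 = Salpha c r A2 \<and> z1 = z2"
proof -
  have "admissible_cap (x - c) k (Lalpha c A1) (z1 - c)" "admissible_cap (x - c) k (Lalpha c A2) (z2 - c)"
    using assms(2,3) by (simp_all add: cap_prop_iff)
  then have L: "Lalpha c A1 = Lalpha c A2" and "z1 - c = z2 - c"
    using admissible_cap_unique[OF assms(1)] by blast+
  have "Valpha A1 = Valpha A2"
  proof (rule set_eqI)
    show "p \<in> Valpha A1 \<longleftrightarrow> p \<in> Valpha A2" for p
      using diff_mem_Lalpha_iff[of p c A1] diff_mem_Lalpha_iff[of p c A2] L by simp
  qed
  then show ?thesis
    using \<open>z1 - c = z2 - c\<close> by (simp add: Salpha_def)
qed

end

theorem lemma5p5:
  fixes c :: "'a::euclidean_space" and r :: real and VV :: "'a set set"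
    and n :: nat and eps :: "nat \<Rightarrow> real"
  assumes "DIM('a) = n + 1"
    and "r > 0"
    and "finite VV"
    and "\<forall>V\<in>VV. affine V \<and> aff_dim V = int n \<and> c \<in> V"
    and "good_eps c r VV n eps"
    and "x \<in> (\<Union>j<n. bigT c r VV eps j)"
  shows "\<exists>k<n. (\<exists>A z. cap_prop c r VV eps x k A z)
           \<and> (\<forall>k'<n. (\<exists>A z. cap_prop c r VV eps x k' A z) \<longrightarrow> k' \<le> k)
           \<and> (\<forall>A1 z1 A2 z2. cap_prop c r VV eps x k A1 z1 \<and> cap_prop c r VV eps x k A2 z2
                \<longrightarrow> Salpha c r A1 = Salpha c r A2 \<and> z1 = z2)"
proof -
  interpret central_arrangement c r VV n eps
    using assms(1,2,4,5) by unfold_locales auto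
  obtain k where "k < n \<and> (\<exists>A z. cap_prop c r VV eps x k A z)"
    and "\<forall>k'. k' < n \<and> (\<exists>A z. cap_prop c r VV eps x k' A z) \<longrightarrow> k' \<le> k"
    using ex_has_greatest_nat[of "\<lambda>k. k < n \<and> (\<exists>A z. cap_prop c r VV eps x k A z)" _ "\<lambda>k. k" n]
      cap_prop_exists[OF assms(6)] by blast
  then show ?thesis
    using cap_prop_unique by blast
qed

end
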